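(* For $\mathfrak{g}$ either atom or loose guards, the triple $(\mathbb{G}_{k}^{\mathfrak{g}}, \varepsilon, (\cdot)^* )$ is a comonad in Kleisli form for all $k>0$, where the counit and coextension are the restrictions of the corresponding operations for the unbounded case.
   Context: For a $\sigma$-structure $\mathcal{A}$, $\mathbb{G}_k^{\mathfrak{g}}\mathcal{A}$ has universe the equivalence classes $[p,a]$ of focussed plays $\langle p,a\rangle$, where $p=[U_1,\ldots,U_n]$ is a non-empty list of $k$-guarded $\mathfrak{g}$-guarded sets of $\mathcal{A}$ (contained in the support of a tuple of length $\le k$ satisfying an atom/loose guard) and $a\in U_n$; $\langle p,a\rangle\sim\langle q,a'\rangle$ iff $a=a'$, $p\sqcap q$ is non-empty, and $a$ lies in the last element of every play on the prefix-order paths from $p\sqcap q$ to $p$ and $q$. Relations: $R^{\mathbb{G}_k\mathcal{A}}=\{([p,a_1],\ldots,[p,a_r])\mid R^{\mathcal{A}}(a_1,\ldots,a_r)\}$. Counit $\varepsilon([p,a])=a$. Coextension of $h:\mathbb{G}_k\mathcal{A}\to\mathcal{B}$: $h^*([[U_1,\ldots,U_n],a])=[[V_1,\ldots,V_n],h([[U_1,\ldots,U_n],a])]$ with $V_j=\{h([[U_1,\ldots,U_j],b])\mid b\in U_j\}$. Comonad in Kleisli form means $\varepsilon^*=\mathsf{id}$, $\varepsilon\circ f^*=f$, $(g\circ f^* )^*=g^*\circ f^*$. *)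

theory Defs
  imports Main "HOL-Library.Sublist"
begin

record ('a, 'r) struct =
  univ :: "'a set"
  rel  :: "'r \<Rightarrow> 'a list set"

definition wf_struct :: "('r \<Rightarrow> nat) \<Rightarrow> ('a, 'r) struct \<Rightarrow> bool" where
  "wf_struct ar A \<longleftrightarrow>
     (\<forall>R t. t \<in> rel A R \<longrightarrow> length t = ar R \<and> set t \<subseteq> univ A)"

definition hom :: "('a, 'r) struct \<Rightarrow> ('b, 'r) struct \<Rightarrow> ('a \<Rightarrow> 'b) \<Rightarrow> bool" where
  "hom A B h \<longleftrightarrow>
     (\<forall>x \<in> univ A. h x \<in> univ B) \<and> (\<forall>R t. t \<in> rel A R \<longrightarrow> map h t \<in> rel B R)"

datatype guard_kind = AtomGuard | LooseGuard

text \<open>A tuple satisfies an atom guard if its support is the support of an atomic fact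
  R(t), or it is a tuple of a single repeated element (equality atom).\<close>
definition atom_guard :: "('a, 'r) struct \<Rightarrow> 'a list \<Rightarrow> bool" where
  "atom_guard A as \<longleftrightarrow> as \<noteq> [] \<and> set as \<subseteq> univ A \<and>
     ((\<exists>a. set as = {a}) \<or> (\<exists>R t. t \<in> rel A R \<and> set t = set as))"

text \<open>A tuple satisfies a loose guard (a conjunction of atoms over its entries) if any
  two distinct entries co-occur in an atomic fact all of whose entries are among the
  entries of the tuple.\<close>
definition loose_guard :: "('a, 'r) struct \<Rightarrow> 'a list \<Rightarrow> bool" where
  "loose_guard A as \<longleftrightarrow> as \<noteq> [] \<and> set as \<subseteq> univ A \<and>
     (\<forall>a \<in> set as. \<forall>b \<in> set as. a \<noteq> b \<longrightarrow>
        (\<exists>R t. t \<in> rel A R \<and> set t \<subseteq> set as \<and> a \<in> set t \<and> b \<in> set t))"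

definition guard_sat :: "guard_kind \<Rightarrow> ('a, 'r) struct \<Rightarrow> 'a list \<Rightarrow> bool" where
  "guard_sat g A as = (case g of AtomGuard \<Rightarrow> atom_guard A as | LooseGuard \<Rightarrow> loose_guard A as)"

definition guarded_set :: "guard_kind \<Rightarrow> nat \<Rightarrow> ('a, 'r) struct \<Rightarrow> 'a set \<Rightarrow> bool" where
  "guarded_set g k A U \<longleftrightarrow> (\<exists>as. length as \<le> k \<and> guard_sat g A as \<and> U \<subseteq> set as)"

definition fplay :: "guard_kind \<Rightarrow> nat \<Rightarrow> ('a, 'r) struct \<Rightarrow> 'a set list \<times> 'a \<Rightarrow> bool" where
  "fplay g k A x \<longleftrightarrow> (case x of (p, a) \<Rightarrow>
     p \<noteq> [] \<and> (\<forall>U \<in> set p. guarded_set g k A U) \<and> a \<in> last p)"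

definition fplays :: "guard_kind \<Rightarrow> nat \<Rightarrow> ('a, 'r) struct \<Rightarrow> ('a set list \<times> 'a) set" where
  "fplays g k A = {x. fplay g k A x}"

definition on_path :: "'a set list \<Rightarrow> 'a set list \<Rightarrow> 'a \<Rightarrow> bool" where
  "on_path r p a \<longleftrightarrow> (\<forall>s. prefix r s \<and> prefix s p \<longrightarrow> a \<in> last s)"

definition play_equiv :: "'a set list \<times> 'a \<Rightarrow> 'a set list \<times> 'a \<Rightarrow> bool" where
  "play_equiv x y \<longleftrightarrow> (case x of (p, a) \<Rightarrow> case y of (q, a') \<Rightarrow>
     a = a' \<and> longest_common_prefix p q \<noteq> [] \<and>
     on_path (longest_common_prefix p q) p a \<and> on_path (longest_common_prefix p q) q a)"

definition play_rel :: "guard_kind \<Rightarrow> nat \<Rightarrow> ('a, 'r) struct \<Rightarrow> ('a set list \<times> 'a) rel" where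
  "play_rel g k A = {(x, y). x \<in> fplays g k A \<and> y \<in> fplays g k A \<and> play_equiv x y}"

definition cls :: "guard_kind \<Rightarrow> nat \<Rightarrow> ('a, 'r) struct \<Rightarrow> 'a set list \<Rightarrow> 'a \<Rightarrow> ('a set list \<times> 'a) set" where
  "cls g k A p a = play_rel g k A `` {(p, a)}"

definition Gk :: "guard_kind \<Rightarrow> nat \<Rightarrow> ('a, 'r) struct \<Rightarrow> (('a set list \<times> 'a) set, 'r) struct" where
  "Gk g k A =
     \<lparr> univ = fplays g k A // play_rel g k A,
       rel = (\<lambda>R. {map (\<lambda>a. cls g k A p a) as | p as.
                     as \<in> rel A R \<and> (\<forall>a \<in> set as. fplay g k A (p, a))}) \<rparr>"

definition counit :: "('a set list \<times> 'a) set \<Rightarrow> 'a" where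
  "counit X = snd (SOME x. x \<in> X)"

text \<open>Coextension of h : G_k A \<rightarrow> B:
  h*([[U_1..U_n],a]) = [[V_1..V_n], h([[U_1..U_n],a])],
  V_j = { h([[U_1..U_j],b]) | b \<in> U_j }  (via a representative).\<close>
definition coext :: "guard_kind \<Rightarrow> nat \<Rightarrow> ('a, 'r) struct \<Rightarrow> ('b, 'r) struct
    \<Rightarrow> (('a set list \<times> 'a) set \<Rightarrow> 'b) \<Rightarrow> ('a set list \<times> 'a) set \<Rightarrow> ('b set list \<times> 'b) set" where
  "coext g k A B h X =
     (let p = fst (SOME x. x \<in> X)
      in cls g k B
           (map (\<lambda>j. (\<lambda>b. h (cls g k A (take j p) b)) ` (p ! (j - 1))) [1..<Suc (length p)])
           (h X))"

end

theory Submission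
  imports Defs
begin

text \<open>Two focussed plays are equivalent iff some non-empty common prefix u is such that
  the focus stays in the last set all the way from u to either play; as the prefixes of a play
  are linearly ordered, this is an equivalence relation. The substance of the theorem is that
  the coextension of a homomorphism h : G_k A \<rightarrow> B is well defined. First, each V_j is again
  k-guarded, since the map b \<mapsto> h([U_1, ..., U_j], b) is the restriction of a homomorphism
  on a guard tuple covering U_j. Second, equivalent plays are sent to equivalent plays, because
  the classes of the focus along the common path are all the same. The comonad laws are then
  computations on representatives.\<close>

section \<open>Equivalence of focussed plays\<close>

lemma on_path_mono: "on_path u p a \<Longrightarrow> prefix u v \<Longrightarrow> on_path v p a"
  unfolding on_path_def using prefix_order.order_trans by blast

lemma on_path_self: "on_path p p a \<longleftrightarrow> a \<in> last p"
  unfolding on_path_def using prefix_order.antisym by blast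

lemma on_path_snoc: "a \<in> last p \<Longrightarrow> a \<in> U \<Longrightarrow> on_path p (p @ [U]) a"
  unfolding on_path_def using prefix_order.antisym by (fastforce simp: prefix_snoc)

lemma on_path_branch:
  assumes "on_path u q a" "prefix u w" "prefix w q" "prefix w r" "on_path w r a"
  shows "on_path u r a"
  unfolding on_path_def
proof (intro allI impI)
  fix s assume s: "prefix u s \<and> prefix s r"
  then consider "prefix s w" | "prefix w s" using assms(4) prefix_same_cases by blast
  then show "a \<in> last s"
  proof cases
    case 1
    then show ?thesis using assms(1,3) s prefix_order.order_trans unfolding on_path_def by blast
  next
    case 2
    then show ?thesis using assms(5) s unfolding on_path_def by blast
  qed
qed

lemma play_equiv_iff:
  "play_equiv (p, a) (q, b) \<longleftrightarrow>
     a = b \<and> (\<exists>u. u \<noteq> [] \<and> prefix u p \<and> prefix u q \<and> on_path u p a \<and> on_path u q a)"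
    (is "_ \<longleftrightarrow> _ \<and> (\<exists>u. ?common u)")
proof
  assume "play_equiv (p, a) (q, b)"
  then show "a = b \<and> (\<exists>u. ?common u)"
    unfolding play_equiv_def
    using longest_common_prefix_prefix1 longest_common_prefix_prefix2 by blast
next
  assume "a = b \<and> (\<exists>u. ?common u)"
  then obtain u where "a = b" and u: "?common u" by blast
  have "prefix u (longest_common_prefix p q)"
    using u longest_common_prefix_max_prefix by blast
  then have "longest_common_prefix p q \<noteq> []"
    and "on_path (longest_common_prefix p q) p a" "on_path (longest_common_prefix p q) q a"
    using u on_path_mono by auto
  with \<open>a = b\<close> show "play_equiv (p, a) (q, b)"
    unfolding play_equiv_def by simp
qed

lemma play_equiv_refl: "p \<noteq> [] \<Longrightarrow> a \<in> last p \<Longrightarrow> play_equiv (p, a) (p, a)"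
  unfolding play_equiv_iff by (metis on_path_self prefix_order.refl)

lemma play_equiv_sym: "play_equiv x y \<Longrightarrow> play_equiv y x"
  by (cases x, cases y) (auto simp: play_equiv_iff)

lemma play_equiv_trans:
  assumes "play_equiv (p, a) (q, b)" and "play_equiv (q, b) (r, c)"
  shows "play_equiv (p, a) (r, c)"
proof -
  obtain u where u: "a = b" "u \<noteq> []" "prefix u p" "prefix u q" "on_path u p a" "on_path u q a"
    using assms(1) unfolding play_equiv_iff by blast
  obtain w where w: "b = c" "w \<noteq> []" "prefix w q" "prefix w r" "on_path w q b" "on_path w r b"
    using assms(2) unfolding play_equiv_iff by blast
  consider "prefix u w" | "prefix w u" using u(4) w(3) prefix_same_cases by blast
  then show ?thesis
  proof cases
    case 1
    then have "on_path u r a" using on_path_branch[of u q a w r] u w by simp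
    moreover have "prefix u r" using 1 w(4) by (rule prefix_order.order_trans)
    ultimately show ?thesis
      unfolding play_equiv_iff using u w by blast
  next
    case 2
    then have "on_path w p a" using on_path_branch[of w q a u p] u w by simp
    moreover have "prefix w p" using 2 u(3) by (rule prefix_order.order_trans)
    ultimately show ?thesis
      unfolding play_equiv_iff using u w by blast
  qed
qed

lemma play_equiv_prefix:
  assumes "u \<noteq> []" "prefix u v" "prefix v p" "on_path u p a"
  shows "play_equiv (v, a) (p, a)"
proof -
  have "a \<in> last v" using assms(2-4) unfolding on_path_def by blast
  then have "on_path v v a" by (simp add: on_path_self)
  moreover have "v \<noteq> []" using assms(1,2) by auto
  ultimately show ?thesis
    unfolding play_equiv_iff using assms(3) on_path_mono[OF assms(4,2)] by blast
qed

lemma equiv_play_rel: "equiv (fplays g k A) (play_rel g k A)"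
proof (rule equivI)
  show "play_rel g k A \<subseteq> fplays g k A \<times> fplays g k A"
    unfolding play_rel_def by blast
  show "refl_on (fplays g k A) (play_rel g k A)"
    by (auto simp: refl_on_def play_rel_def fplays_def fplay_def intro: play_equiv_refl)
  show "sym (play_rel g k A)"
    unfolding sym_def play_rel_def by (auto intro: play_equiv_sym)
  show "trans (play_rel g k A)"
    unfolding trans_def play_rel_def by (clarsimp, metis play_equiv_trans)
qed

section \<open>The structure G_k A and the counit\<close>

lemma fplays_prefix:
  "(p, a) \<in> fplays g k A \<Longrightarrow> prefix v p \<Longrightarrow> v \<noteq> [] \<Longrightarrow> b \<in> last v \<Longrightarrow> (v, b) \<in> fplays g k A"
  unfolding fplays_def fplay_def using set_mono_prefix by fastforce

lemma fplays_take:
  assumes "(p, a) \<in> fplays g k A" "i < length p" "b \<in> p ! i"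
  shows "(take (Suc i) p, b) \<in> fplays g k A"
proof -
  have "take (Suc i) p \<noteq> []" "last (take (Suc i) p) = p ! i"
    using assms(2) by (auto simp: take_Suc_conv_app_nth)
  then show ?thesis using fplays_prefix[OF assms(1) take_is_prefix] assms(3) by simp
qed

lemma cls_eq:
  "(p, a) \<in> fplays g k A \<Longrightarrow> (q, b) \<in> fplays g k A \<Longrightarrow> play_equiv (p, a) (q, b) \<Longrightarrow>
   cls g k A p a = cls g k A q b"
  unfolding cls_def by (rule equiv_class_eq[OF equiv_play_rel]) (simp add: play_rel_def)

lemma cls_in_univ: "(p, a) \<in> fplays g k A \<Longrightarrow> cls g k A p a \<in> univ (Gk g k A)"
  unfolding cls_def Gk_def by (simp add: quotientI)

lemma univ_GkE:
  assumes "X \<in> univ (Gk g k A)"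
  obtains p a where "(p, a) \<in> fplays g k A" "X = cls g k A p a"
  using assms unfolding Gk_def cls_def by (auto elim!: quotientE)

lemma rel_GkI:
  "t \<in> rel A R \<Longrightarrow> \<forall>a \<in> set t. (p, a) \<in> fplays g k A \<Longrightarrow> map (cls g k A p) t \<in> rel (Gk g k A) R"
  unfolding Gk_def fplays_def by auto

lemma rel_GkE:
  assumes "t \<in> rel (Gk g k A) R"
  obtains p as where "as \<in> rel A R" "\<forall>a \<in> set as. (p, a) \<in> fplays g k A" "t = map (cls g k A p) as"
  using assms unfolding Gk_def fplays_def by auto

lemma some_in_cls:
  assumes "(p, a) \<in> fplays g k A"
  obtains q where "(SOME x. x \<in> cls g k A p a) = (q, a)" "(q, a) \<in> fplays g k A"
    "play_equiv (q, a) (p, a)"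
proof -
  have "(p, a) \<in> cls g k A p a"
    using assms equiv_class_self[OF equiv_play_rel] unfolding cls_def by blast
  then have "(SOME x. x \<in> cls g k A p a) \<in> cls g k A p a" by (rule someI)
  then obtain q b where "(SOME x. x \<in> cls g k A p a) = (q, b)" "((p, a), (q, b)) \<in> play_rel g k A"
    unfolding cls_def by (metis Image_singleton_iff surj_pair)
  moreover from this(2) have "(q, b) \<in> fplays g k A" "play_equiv (p, a) (q, b)"
    unfolding play_rel_def by auto
  moreover from this(2) have "b = a" by (simp add: play_equiv_iff)
  ultimately show ?thesis using that play_equiv_sym by blast
qed

lemma counit_cls: "(p, a) \<in> fplays g k A \<Longrightarrow> counit (cls g k A p a) = a"
  unfolding counit_def by (metis some_in_cls snd_conv)

lemma guard_sat_univ: "guard_sat g A as \<Longrightarrow> set as \<subseteq> univ A"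
  unfolding guard_sat_def atom_guard_def loose_guard_def by (cases g) auto

lemma fplays_univ:
  assumes "(p, a) \<in> fplays g k A"
  shows "a \<in> univ A"
proof -
  have "guarded_set g k A (last p)" "a \<in> last p"
    using assms unfolding fplays_def fplay_def by auto
  then show ?thesis unfolding guarded_set_def using guard_sat_univ by blast
qed

lemma hom_counit: "hom (Gk g k A) A counit"
  unfolding hom_def
proof (intro conjI allI impI ballI)
  fix X assume "X \<in> univ (Gk g k A)"
  then show "counit X \<in> univ A" by (metis univ_GkE counit_cls fplays_univ)
next
  fix R t assume "t \<in> rel (Gk g k A) R"
  then obtain p as where "as \<in> rel A R" "\<forall>a \<in> set as. (p, a) \<in> fplays g k A"
    "t = map (cls g k A p) as"
    by (rule rel_GkE)
  then show "map counit t \<in> rel A R" by (simp add: counit_cls map_idI)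
qed

lemma wf_Gk: "wf_struct ar A \<Longrightarrow> wf_struct ar (Gk g k A)"
  unfolding wf_struct_def by (auto elim!: rel_GkE intro!: cls_in_univ)

section \<open>Homomorphisms out of G_k A preserve guards\<close>

lemma guard_sat_nonempty: "guard_sat g A as \<Longrightarrow> as \<noteq> []"
  unfolding guard_sat_def atom_guard_def loose_guard_def by (cases g) auto

lemma guard_sat_image:
  assumes as: "guard_sat g A as" and F_univ: "F ` set as \<subseteq> univ B"
    and F_rel: "\<And>R t. t \<in> rel A R \<Longrightarrow> set t \<subseteq> set as \<Longrightarrow> map F t \<in> rel B R"
  shows "guard_sat g B (map F as)"
proof (cases g)
  case AtomGuard
  then have "(\<exists>a. set as = {a}) \<or> (\<exists>R t. t \<in> rel A R \<and> set t = set as)"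
    using as unfolding guard_sat_def atom_guard_def by simp
  then have "(\<exists>b. set (map F as) = {b}) \<or> (\<exists>R t. t \<in> rel B R \<and> set t = set (map F as))"
  proof
    assume "\<exists>a. set as = {a}"
    then show ?thesis by auto
  next
    assume "\<exists>R t. t \<in> rel A R \<and> set t = set as"
    then obtain R t where "t \<in> rel A R" "set t = set as" by blast
    then have "map F t \<in> rel B R" "set (map F t) = set (map F as)" using F_rel by auto
    then show ?thesis by blast
  qed
  then show ?thesis
    using AtomGuard as F_univ guard_sat_nonempty unfolding guard_sat_def atom_guard_def by simp
next
  case LooseGuard
  then have pairs: "\<forall>a \<in> set as. \<forall>b \<in> set as. a \<noteq> b \<longrightarrow>
      (\<exists>R t. t \<in> rel A R \<and> set t \<subseteq> set as \<and> a \<in> set t \<and> b \<in> set t)"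
    using as unfolding guard_sat_def loose_guard_def by simp
  have "\<exists>R t. t \<in> rel B R \<and> set t \<subseteq> set (map F as) \<and> x \<in> set t \<and> y \<in> set t"
    if xy: "x \<in> set (map F as)" "y \<in> set (map F as)" "x \<noteq> y" for x y
  proof -
    obtain a b where ab: "a \<in> set as" "b \<in> set as" "x = F a" "y = F b"
      using xy(1,2) by auto
    moreover have "a \<noteq> b" using ab xy(3) by blast
    ultimately obtain R t where "t \<in> rel A R" "set t \<subseteq> set as" "a \<in> set t" "b \<in> set t"
      using pairs ab(1,2) by blast
    then show ?thesis using F_rel ab by (intro exI[of _ R] exI[of _ "map F t"]) auto
  qed
  then show ?thesis
    using LooseGuard as F_univ guard_sat_nonempty unfolding guard_sat_def loose_guard_def by simp
qed

lemma guard_sat_local_image: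
  assumes f: "hom (Gk g k A) B f" and as: "guard_sat g A as"
    and p: "\<forall>b \<in> set as. (p, b) \<in> fplays g k A"
  shows "guard_sat g B (map (\<lambda>b. f (cls g k A p b)) as)"
proof (rule guard_sat_image[OF as])
  show "(\<lambda>b. f (cls g k A p b)) ` set as \<subseteq> univ B"
  proof (rule image_subsetI)
    fix b assume "b \<in> set as"
    then have "cls g k A p b \<in> univ (Gk g k A)" using p by (simp add: cls_in_univ)
    then show "f (cls g k A p b) \<in> univ B" using f unfolding hom_def by blast
  qed
  fix R t assume t: "t \<in> rel A R" "set t \<subseteq> set as"
  then have "\<forall>b \<in> set t. (p, b) \<in> fplays g k A" using p by blast
  with t(1) have "map (cls g k A p) t \<in> rel (Gk g k A) R" by (rule rel_GkI)
  then have "map f (map (cls g k A p) t) \<in> rel B R" using f unfolding hom_def by blast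
  then show "map (\<lambda>b. f (cls g k A p b)) t \<in> rel B R" by (simp add: comp_def)
qed

text \<open>To see that the image of the last set U of a play is guarded, extend the play by the
  whole support of a guard tuple covering U: this does not change the classes of the elements
  of U, and the extended play focusses on every entry of the tuple.\<close>

lemma guarded_set_local_image:
  assumes f: "hom (Gk g k A) B f"
    and v: "v \<noteq> []" "\<forall>U \<in> set v. guarded_set g k A U"
  shows "guarded_set g k B ((\<lambda>b. f (cls g k A v b)) ` last v)"
proof -
  have "guarded_set g k A (last v)" using v by simp
  then obtain as where as: "length as \<le> k" "guard_sat g A as" "last v \<subseteq> set as"
    unfolding guarded_set_def by blast
  define w where "w = v @ [set as]"
  have "guarded_set g k A (set as)" unfolding guarded_set_def using as by blast
  then have w_fplays: "(w, b) \<in> fplays g k A" if "b \<in> set as" for b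
    using v that unfolding w_def fplays_def fplay_def by simp
  have "cls g k A v b = cls g k A w b" if "b \<in> last v" for b
  proof (rule cls_eq)
    show "(v, b) \<in> fplays g k A" using v that unfolding fplays_def fplay_def by simp
    show "(w, b) \<in> fplays g k A" using w_fplays as(3) that by blast
    have "on_path v w b" unfolding w_def using that as(3) by (intro on_path_snoc) auto
    then show "play_equiv (v, b) (w, b)"
      using play_equiv_prefix[OF v(1) prefix_order.refl] unfolding w_def by simp
  qed
  then have "(\<lambda>b. f (cls g k A v b)) ` last v \<subseteq> set (map (\<lambda>b. f (cls g k A w b)) as)"
    using as(3) by auto
  moreover have "guard_sat g B (map (\<lambda>b. f (cls g k A w b)) as)"
    using guard_sat_local_image[OF f as(2)] w_fplays by blast
  moreover have "length (map (\<lambda>b. f (cls g k A w b)) as) \<le> k" using as(1) by simp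
  ultimately show ?thesis unfolding guarded_set_def by blast
qed

section \<open>The coextension\<close>

lemma prefix_conv_take: "prefix u p \<longleftrightarrow> u = take (length u) p"
  by (metis prefix_def append_take_drop_id take_is_prefix append_eq_conv_conj)

text \<open>The play [V_1, ..., V_n] of the coextension h*([[U_1, ..., U_n], a]), indexed from 0.\<close>

definition coext_play :: "guard_kind \<Rightarrow> nat \<Rightarrow> ('a, 'r) struct \<Rightarrow> (('a set list \<times> 'a) set \<Rightarrow> 'b)
    \<Rightarrow> 'a set list \<Rightarrow> 'b set list" where
  "coext_play g k A h p = map (\<lambda>j. (\<lambda>b. h (cls g k A (take (Suc j) p) b)) ` (p ! j)) [0..<length p]"

lemma coext_eq_cls_coext_play:
  "coext g k A B h X = cls g k B (coext_play g k A h (fst (SOME x. x \<in> X))) (h X)"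
  unfolding coext_def coext_play_def Let_def by (simp add: map_Suc_upt[symmetric] comp_def del: upt_Suc)

lemma length_coext_play [simp]: "length (coext_play g k A h p) = length p"
  by (simp add: coext_play_def)

lemma coext_play_eq_Nil_iff [simp]: "coext_play g k A h p = [] \<longleftrightarrow> p = []"
  by (metis length_0_conv length_coext_play)

lemma nth_coext_play:
  "i < length p \<Longrightarrow> coext_play g k A h p ! i = (\<lambda>b. h (cls g k A (take (Suc i) p) b)) ` (p ! i)"
  by (simp add: coext_play_def)

lemma last_coext_play:
  "p \<noteq> [] \<Longrightarrow> last (coext_play g k A h p) = (\<lambda>b. h (cls g k A p b)) ` last p"
  by (simp add: last_conv_nth nth_coext_play)

lemma take_coext_play: "take n (coext_play g k A h p) = coext_play g k A h (take n p)"
proof (rule nth_equalityI)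
  fix i assume "i < length (take n (coext_play g k A h p))"
  then have "i < n" "i < length p" by auto
  moreover have "take (Suc i) (take n p) = take (Suc i) p" using \<open>i < n\<close> by (simp add: min_def)
  ultimately show "take n (coext_play g k A h p) ! i = coext_play g k A h (take n p) ! i"
    by (simp add: nth_coext_play)
qed simp

lemma prefix_coext_play:
  assumes "prefix u p"
  shows "prefix (coext_play g k A h u) (coext_play g k A h p)"
proof -
  have "coext_play g k A h u = take (length u) (coext_play g k A h p)"
    using assms by (simp add: prefix_conv_take take_coext_play)
  then show ?thesis by (simp add: take_is_prefix)
qed

lemma prefix_coext_playE:
  assumes "prefix s (coext_play g k A h p)"
  obtains v where "prefix v p" "s = coext_play g k A h v"
proof
  show "prefix (take (length s) p) p" by (rule take_is_prefix)
  show "s = coext_play g k A h (take (length s) p)"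
    using assms by (simp add: prefix_conv_take take_coext_play)
qed

lemma coext_play_fplays:
  assumes f: "hom (Gk g k A) B f" and pa: "(p, a) \<in> fplays g k A"
  shows "(coext_play g k A f p, f (cls g k A p a)) \<in> fplays g k B"
proof -
  have p: "p \<noteq> []" "\<forall>U \<in> set p. guarded_set g k A U" "a \<in> last p"
    using pa unfolding fplays_def fplay_def by simp_all
  have "guarded_set g k B V" if V: "V \<in> set (coext_play g k A f p)" for V
  proof -
    obtain i where i: "i < length p" "V = coext_play g k A f p ! i"
      using V by (auto simp: in_set_conv_nth)
    let ?v = "take (Suc i) p"
    have v: "?v \<noteq> []" "\<forall>U \<in> set ?v. guarded_set g k A U" and "last ?v = p ! i"
      using i(1) p(2) by (auto simp: take_Suc_conv_app_nth dest: in_set_takeD)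
    then have "V = (\<lambda>b. f (cls g k A ?v b)) ` last ?v" using i by (simp add: nth_coext_play)
    then show ?thesis using guarded_set_local_image[OF f v] by simp
  qed
  moreover have "f (cls g k A p a) \<in> last (coext_play g k A f p)"
    using p by (simp add: last_coext_play)
  ultimately show ?thesis using p unfolding fplays_def fplay_def by simp
qed

lemma on_path_coext_play:
  assumes pa: "(p, a) \<in> fplays g k A" and u: "u \<noteq> []" "prefix u p" "on_path u p a"
  shows "on_path (coext_play g k A f u) (coext_play g k A f p) (f (cls g k A p a))"
  unfolding on_path_def
proof (intro allI impI)
  fix s assume s: "prefix (coext_play g k A f u) s \<and> prefix s (coext_play g k A f p)"
  then obtain v where v: "prefix v p" "s = coext_play g k A f v" by (auto elim: prefix_coext_playE)
  have "length u \<le> length v" using s v(2) prefix_length_le by fastforce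
  with u(2) v(1) have uv: "prefix u v" by (rule prefix_length_prefix)
  then have v_ne: "v \<noteq> []" and a_v: "a \<in> last v" using u v(1) unfolding on_path_def by auto
  then have "(v, a) \<in> fplays g k A" by (rule fplays_prefix[OF pa v(1)])
  then have "cls g k A v a = cls g k A p a"
    using pa play_equiv_prefix[OF u(1) uv v(1) u(3)] by (rule cls_eq)
  moreover have "f (cls g k A v a) \<in> last s"
    using a_v v_ne v(2) by (simp add: last_coext_play)
  ultimately show "f (cls g k A p a) \<in> last s" by simp
qed

text \<open>This makes the coextension independent of the representative chosen by SOME.\<close>

lemma play_equiv_coext_play:
  assumes pa: "(p, a) \<in> fplays g k A" and qa: "(q, a) \<in> fplays g k A"
    and equiv: "play_equiv (p, a) (q, a)"
  shows "play_equiv (coext_play g k A f p, f (cls g k A p a)) (coext_play g k A f q, f (cls g k A q a))"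
proof -
  have same_cls: "cls g k A q a = cls g k A p a" using cls_eq[OF pa qa equiv] by simp
  obtain u where u: "u \<noteq> []" "prefix u p" "prefix u q" "on_path u p a" "on_path u q a"
    using equiv unfolding play_equiv_iff by blast
  have "on_path (coext_play g k A f u) (coext_play g k A f p) (f (cls g k A p a))"
    using on_path_coext_play[OF pa u(1,2,4)] .
  moreover have "on_path (coext_play g k A f u) (coext_play g k A f q) (f (cls g k A p a))"
    using on_path_coext_play[OF qa u(1,3,5)] same_cls by simp
  ultimately show ?thesis
    unfolding play_equiv_iff same_cls
    by (intro conjI exI[of _ "coext_play g k A f u"]) (simp_all add: u prefix_coext_play)
qed

lemma coext_cls:
  assumes f: "hom (Gk g k A) B f" and pa: "(p, a) \<in> fplays g k A"
  shows "coext g k A B f (cls g k A p a) = cls g k B (coext_play g k A f p) (f (cls g k A p a))"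
proof -
  obtain q where q: "(SOME x. x \<in> cls g k A p a) = (q, a)" "(q, a) \<in> fplays g k A"
    "play_equiv (q, a) (p, a)"
    using some_in_cls[OF pa] by blast
  have "cls g k A q a = cls g k A p a" using cls_eq[OF q(2) pa q(3)] .
  moreover have "play_equiv (coext_play g k A f q, f (cls g k A q a))
      (coext_play g k A f p, f (cls g k A p a))"
    using play_equiv_coext_play[OF q(2) pa q(3)] .
  ultimately show ?thesis
    using cls_eq[OF coext_play_fplays[OF f q(2)] coext_play_fplays[OF f pa]]
    by (simp add: coext_eq_cls_coext_play q(1))
qed

lemma coext_hom:
  assumes f: "hom (Gk g k A) B f"
  shows "hom (Gk g k A) (Gk g k B) (coext g k A B f)"
  unfolding hom_def
proof (intro conjI allI impI ballI)
  fix X assume "X \<in> univ (Gk g k A)"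
  then obtain p a where pa: "(p, a) \<in> fplays g k A" "X = cls g k A p a" by (rule univ_GkE)
  then show "coext g k A B f X \<in> univ (Gk g k B)"
    by (simp add: coext_cls[OF f] cls_in_univ coext_play_fplays[OF f])
next
  fix R t assume "t \<in> rel (Gk g k A) R"
  then obtain p as where as: "as \<in> rel A R" and p: "\<forall>a \<in> set as. (p, a) \<in> fplays g k A"
    and t: "t = map (cls g k A p) as"
    by (rule rel_GkE)
  from as p have "map (cls g k A p) as \<in> rel (Gk g k A) R" by (rule rel_GkI)
  then have "map f (map (cls g k A p) as) \<in> rel B R" using f unfolding hom_def by blast
  then have "map (\<lambda>a. f (cls g k A p a)) as \<in> rel B R" by (simp add: comp_def)
  moreover have "\<forall>b \<in> set (map (\<lambda>a. f (cls g k A p a)) as).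
      (coext_play g k A f p, b) \<in> fplays g k B"
    using p coext_play_fplays[OF f] by simp
  ultimately have "map (cls g k B (coext_play g k A f p)) (map (\<lambda>a. f (cls g k A p a)) as)
      \<in> rel (Gk g k B) R"
    by (rule rel_GkI)
  moreover have "map (coext g k A B f) t
      = map (cls g k B (coext_play g k A f p)) (map (\<lambda>a. f (cls g k A p a)) as)"
    unfolding t map_map using p by (intro map_cong) (simp_all add: coext_cls[OF f])
  ultimately show "map (coext g k A B f) t \<in> rel (Gk g k B) R" by simp
qed

section \<open>The comonad laws\<close>

lemma hom_comp: "hom A B f \<Longrightarrow> hom B C h \<Longrightarrow> hom A C (h \<circ> f)"
  unfolding hom_def by (metis comp_apply map_map)

lemma coext_play_counit:
  assumes pa: "(p, a) \<in> fplays g k A"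
  shows "coext_play g k A counit p = p"
proof (rule nth_equalityI)
  fix i assume "i < length (coext_play g k A counit p)"
  then have i: "i < length p" by simp
  then have "(\<lambda>b. counit (cls g k A (take (Suc i) p) b)) ` (p ! i) = p ! i"
    using fplays_take[OF pa] by (simp add: counit_cls)
  then show "coext_play g k A counit p ! i = p ! i" using i by (simp add: nth_coext_play)
qed simp

lemma coext_play_comp:
  assumes f: "hom (Gk g k A) B f" and pa: "(p, a) \<in> fplays g k A"
  shows "coext_play g k A (h \<circ> coext g k A B f) p = coext_play g k B h (coext_play g k A f p)"
proof (rule nth_equalityI)
  fix i assume "i < length (coext_play g k A (h \<circ> coext g k A B f) p)"
  then have i: "i < length p" by simp
  let ?v = "take (Suc i) p"
  have "coext_play g k A (h \<circ> coext g k A B f) p ! i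
      = (\<lambda>b. h (coext g k A B f (cls g k A ?v b))) ` (p ! i)"
    using i by (simp add: nth_coext_play)
  also have "\<dots> = (\<lambda>b. h (cls g k B (coext_play g k A f ?v) (f (cls g k A ?v b)))) ` (p ! i)"
    using coext_cls[OF f fplays_take[OF pa i]] by simp
  also have "\<dots> = coext_play g k B h (coext_play g k A f p) ! i"
    using i by (simp add: nth_coext_play take_coext_play image_image)
  finally show "coext_play g k A (h \<circ> coext g k A B f) p ! i
      = coext_play g k B h (coext_play g k A f p) ! i" .
qed simp

lemma coext_counit:
  assumes "X \<in> univ (Gk g k A)"
  shows "coext g k A A counit X = X"
proof -
  obtain p a where pa: "(p, a) \<in> fplays g k A" "X = cls g k A p a"
    using assms by (rule univ_GkE)
  then show ?thesis
    by (simp add: coext_cls[OF hom_counit] coext_play_counit counit_cls)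
qed

lemma counit_coext:
  assumes f: "hom (Gk g k A) B f" and "X \<in> univ (Gk g k A)"
  shows "counit (coext g k A B f X) = f X"
proof -
  obtain p a where pa: "(p, a) \<in> fplays g k A" "X = cls g k A p a"
    using assms(2) by (rule univ_GkE)
  then show ?thesis
    by (simp add: coext_cls[OF f] counit_cls[OF coext_play_fplays[OF f]])
qed

lemma coext_comp:
  assumes f: "hom (Gk g k A) B f" and h: "hom (Gk g k B) C h" and "X \<in> univ (Gk g k A)"
  shows "coext g k A C (h \<circ> coext g k A B f) X = coext g k B C h (coext g k A B f X)"
proof -
  obtain p a where pa: "(p, a) \<in> fplays g k A" and X: "X = cls g k A p a"
    using assms(3) by (rule univ_GkE)
  have hf: "hom (Gk g k A) C (h \<circ> coext g k A B f)"
    using hom_comp[OF coext_hom[OF f] h] .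
  have "coext g k A C (h \<circ> coext g k A B f) X
      = cls g k C (coext_play g k B h (coext_play g k A f p)) (h (coext g k A B f X))"
    by (simp add: X coext_cls[OF hf pa] coext_play_comp[OF f pa])
  also have "\<dots> = coext g k B C h (coext g k A B f X)"
    by (simp add: X coext_cls[OF f pa] coext_cls[OF h coext_play_fplays[OF f pa]])
  finally show ?thesis .
qed

theorem theorem3p6:
  fixes ar :: "'r \<Rightarrow> nat" and g :: guard_kind and k :: nat
  assumes "k > 0"
  shows
    "(\<forall>A :: ('a, 'r) struct. wf_struct ar A \<longrightarrow>
        wf_struct ar (Gk g k A) \<and> hom (Gk g k A) A counit) \<and>
     (\<forall>A :: ('a, 'r) struct. wf_struct ar A \<longrightarrow>
        (\<forall>X \<in> univ (Gk g k A). coext g k A A counit X = X)) \<and>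
     (\<forall>(A :: ('a, 'r) struct) (B :: ('b, 'r) struct) f.
        wf_struct ar A \<longrightarrow> wf_struct ar B \<longrightarrow> hom (Gk g k A) B f \<longrightarrow>
          hom (Gk g k A) (Gk g k B) (coext g k A B f) \<and>
          (\<forall>X \<in> univ (Gk g k A). counit (coext g k A B f X) = f X)) \<and>
     (\<forall>(A :: ('a, 'r) struct) (B :: ('b, 'r) struct) (C :: ('c, 'r) struct) f h.
        wf_struct ar A \<longrightarrow> wf_struct ar B \<longrightarrow> wf_struct ar C \<longrightarrow>
        hom (Gk g k A) B f \<longrightarrow> hom (Gk g k B) C h \<longrightarrow>
          (\<forall>X \<in> univ (Gk g k A).
             coext g k A C (h \<circ> coext g k A B f) X = coext g k B C h (coext g k A B f X)))"
  by (simp add: wf_Gk hom_counit coext_counit coext_hom counit_coext coext_comp)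

end
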